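(* Let $\Sigma$ be an alphabet of size $d\ge 2$, let $\delta\in[0,1/d)$, and let $N$ be a $\delta$-upper bounded noise matrix on $\Sigma$. Let $\delta'=f(\delta)$. There exists a stochastic matrix $P=P(N,\delta)$ such that, for any protocol $\mathcal{A}$, the simulation of $\mathcal{A}$ with artificial noise $P$ under noise $N$ has the same distribution as $\mathcal{A}$ run under the $\delta'$-uniform noise matrix. In particular, for every displayed message $i\in\Sigma$, the message obtained by applying $N$ and then $P$ equals $j$ with probability $T_{i,j}$, where $T$ is the $\delta'$-uniform matrix.
   Context: A $d\times d$ matrix is stochastic if its entries are non-negative and each row sums to $1$. For $\delta\in[0,1/d]$, a stochastic matrix $N$ indexed by $\Sigma$ is: - $\delta$-upper bounded if $N_{\sigma,\sigma}\ge1-(d-1)\delta$ for all $\sigma$ and $N_{\sigma,\sigma'}\le\delta$ for all $\sigma\ne\sigma'$; - $\delta$-uniform if $N_{\sigma,\sigma}=1-(d-1)\delta$ and $N_{\sigma,\sigma'}=\delta$ for all $\sigma\ne\sigma'$. Noise matrices act on messages: when a message $\sigma$ is observed through noise $N$, the observer receives $\sigma'$ with probability $N_{\sigma,\sigma'}$, independently across observations. Simulation of a protocol $\mathcal{A}$ with artificial noise $P$: in every round, each agent replaces every received message $i$ by a random $\sigma\in\Sigma$ with $\Pr(\sigma=j)=P_{ij}$, independently, and then applies $\mathcal{A}$ to the modified messages. The function $f:[0,1/d)\to\mathbb{R}$ is defined by $f(0)=0$ and, for $\delta\in(0,1/d)$, $$f(\delta)=\left(d+\frac{1}{2}\cdot\frac{1}{(d-1)^2}\cdot\frac{1-d\delta}{\delta}\right)^{-1}.$$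 *)

theory Defs
  imports Complex_Main
begin

text \<open>Noise matrices on a finite alphabet 'a (with d = CARD('a)) are
  represented as functions 'a => 'a => real; N i j is the probability that
  displayed message i is observed as j.\<close>

definition stochastic :: "('a::finite \<Rightarrow> 'a \<Rightarrow> real) \<Rightarrow> bool" where
  "stochastic N \<longleftrightarrow> (\<forall>i j. 0 \<le> N i j) \<and> (\<forall>i. (\<Sum>j\<in>UNIV. N i j) = 1)"

definition upper_bounded :: "real \<Rightarrow> ('a::finite \<Rightarrow> 'a \<Rightarrow> real) \<Rightarrow> bool" where
  "upper_bounded \<delta> N \<longleftrightarrow> stochastic N \<and>
     (\<forall>s. N s s \<ge> 1 - (real (card (UNIV :: 'a set)) - 1) * \<delta>) \<and>
     (\<forall>s s'. s \<noteq> s' \<longrightarrow> N s s' \<le> \<delta>)"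

definition uniform_noise :: "real \<Rightarrow> ('a::finite \<Rightarrow> 'a \<Rightarrow> real)" where
  "uniform_noise \<delta> = (\<lambda>s s'. if s = s' then 1 - (real (card (UNIV :: 'a set)) - 1) * \<delta> else \<delta>)"

definition compose_noise :: "('a::finite \<Rightarrow> 'a \<Rightarrow> real) \<Rightarrow> ('a \<Rightarrow> 'a \<Rightarrow> real) \<Rightarrow> ('a \<Rightarrow> 'a \<Rightarrow> real)" where
  "compose_noise N P = (\<lambda>i j. \<Sum>k\<in>UNIV. N i k * P k j)"

definition f_noise :: "nat \<Rightarrow> real \<Rightarrow> real" where
  "f_noise d \<delta> = (if \<delta> = 0 then 0 else
     inverse (real d + (1/2) * (1 / (real d - 1)^2) * ((1 - real d * \<delta>) / \<delta>)))"

end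

theory Submission imports Defs "HOL-Analysis.Analysis" begin

text \<open>Let \<open>d = |\<Sigma>|\<close>. A \<open>\<delta>\<close>-upper bounded \<open>N\<close> with \<open>d\<delta> < 1\<close> satisfies a discrete
  maximum principle: at a minimum (maximum) of \<open>y\<close>, \<open>(N y)\<^sub>i\<close> lies below (above)
  \<open>(1 - d\<delta>) y\<^sub>i + \<delta> \<Sum>y\<close>. Hence \<open>N\<close> is invertible, its inverse \<open>M\<close> has row sums 1, and
  every entry of \<open>M\<close> is at least \<open>-d\<delta>/(1 - d\<delta>)\<close>. Then \<open>P = (1 - d\<delta>') M + \<delta>' J\<close>
  (with \<open>J\<close> the all-ones matrix) satisfies \<open>N P = (1 - d\<delta>') I + \<delta>' J\<close>, the
  \<open>\<delta>'\<close>-uniform matrix, and the choice \<open>\<delta>' = f(\<delta>)\<close> is large enough to make \<open>P\<close> nonnegative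
  because \<open>2(d - 1)\<^sup>2 \<ge> d\<close>.\<close>

definition mat_vec :: "('a::finite \<Rightarrow> 'a \<Rightarrow> real) \<Rightarrow> ('a \<Rightarrow> real) \<Rightarrow> 'a \<Rightarrow> real" where
  "mat_vec N y i = (\<Sum>k\<in>UNIV. N i k * y k)"

lemma mat_vec_uminus: "mat_vec N (\<lambda>k. - y k) = (\<lambda>i. - mat_vec N y i)"
  by (simp add: mat_vec_def fun_eq_iff sum_negf)

lemma mat_vec_const:
  assumes "(\<Sum>k\<in>UNIV. N i k) = 1"
  shows "mat_vec N (\<lambda>k. c) i = c"
  using assms by (simp add: mat_vec_def sum_distrib_right[symmetric])

lemma finite_ex_argmin: "\<exists>m. \<forall>k. (y :: 'a::finite \<Rightarrow> 'b::linorder) m \<le> y k"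
  using ex_is_arg_min_if_finite[of UNIV y] by (auto simp: is_arg_min_linorder)

lemma mat_vec_le_at_argmin:
  fixes N :: "'a::finite \<Rightarrow> 'a \<Rightarrow> real"
  assumes row: "(\<Sum>k\<in>UNIV. N i k) = 1"
    and off_diag: "\<And>k. k \<noteq> i \<Longrightarrow> N i k \<le> \<delta>"
    and argmin: "\<And>k. y i \<le> y k"
  shows "mat_vec N y i \<le> (1 - real CARD('a) * \<delta>) * y i + \<delta> * (\<Sum>k\<in>UNIV. y k)"
proof -
  have "mat_vec N y i = y i + (\<Sum>k\<in>UNIV. N i k * (y k - y i))"
    using row by (simp add: mat_vec_def right_diff_distrib sum_subtractf sum_distrib_right[symmetric])
  also have "(\<Sum>k\<in>UNIV. N i k * (y k - y i)) \<le> (\<Sum>k\<in>UNIV. \<delta> * (y k - y i))"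
  proof (rule sum_mono)
    fix k
    show "N i k * (y k - y i) \<le> \<delta> * (y k - y i)"
      using off_diag[of k] argmin[of k] by (cases "k = i") (auto intro: mult_right_mono)
  qed
  also have "(\<Sum>k\<in>UNIV. \<delta> * (y k - y i)) = \<delta> * (\<Sum>k\<in>UNIV. y k) - real CARD('a) * \<delta> * y i"
    by (simp add: sum_distrib_left[symmetric] sum_subtractf algebra_simps)
  finally show ?thesis by (simp add: algebra_simps)
qed

lemma mat_vec_ge_at_argmax:
  fixes N :: "'a::finite \<Rightarrow> 'a \<Rightarrow> real"
  assumes "(\<Sum>k\<in>UNIV. N i k) = 1"
    and "\<And>k. k \<noteq> i \<Longrightarrow> N i k \<le> \<delta>"
    and "\<And>k. y k \<le> y i"
  shows "mat_vec N y i \<ge> (1 - real CARD('a) * \<delta>) * y i + \<delta> * (\<Sum>k\<in>UNIV. y k)"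
  using mat_vec_le_at_argmin[of N i \<delta> "\<lambda>k. - y k"] assms
  by (simp add: mat_vec_uminus sum_negf)

lemma upper_bounded_mat_vec_eq_0:
  fixes N :: "'a::finite \<Rightarrow> 'a \<Rightarrow> real"
  assumes N: "upper_bounded \<delta> N" and small: "real CARD('a) * \<delta> < 1"
    and ker: "mat_vec N y = (\<lambda>_. 0)"
  shows "y = (\<lambda>_. 0)"
proof -
  have row: "\<And>i. (\<Sum>k\<in>UNIV. N i k) = 1" and off_diag: "\<And>i k. k \<noteq> i \<Longrightarrow> N i k \<le> \<delta>"
    using N unfolding upper_bounded_def stochastic_def by auto
  obtain lo where lo: "\<And>k. y lo \<le> y k" using finite_ex_argmin by blast
  obtain hi where hi: "\<And>k. y k \<le> y hi" using finite_ex_argmin[of "\<lambda>k. - y k"] by auto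
  have "0 \<le> (1 - real CARD('a) * \<delta>) * y lo + \<delta> * (\<Sum>k\<in>UNIV. y k)"
    using mat_vec_le_at_argmin[of N lo \<delta> y, OF row off_diag lo] ker by (simp add: fun_eq_iff)
  moreover have "(1 - real CARD('a) * \<delta>) * y hi + \<delta> * (\<Sum>k\<in>UNIV. y k) \<le> 0"
    using mat_vec_ge_at_argmax[of N hi \<delta> y, OF row off_diag hi] ker by (simp add: fun_eq_iff)
  ultimately have "(1 - real CARD('a) * \<delta>) * y hi \<le> (1 - real CARD('a) * \<delta>) * y lo"
    by linarith
  then have "y hi \<le> y lo"
    using small by simp
  then have const: "y = (\<lambda>_. y lo)"
    using lo hi by (meson order_antisym order_trans ext)
  have "y lo = mat_vec N (\<lambda>_. y lo) lo"
    using mat_vec_const[OF row] by simp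
  also have "\<dots> = 0"
    using ker const by metis
  finally show ?thesis using const by simp
qed

lemma mat_vec_injective_imp_right_inverse:
  fixes N :: "'a::finite \<Rightarrow> 'a \<Rightarrow> real"
  assumes ker: "\<And>y. mat_vec N y = (\<lambda>_. 0) \<Longrightarrow> y = (\<lambda>_. 0)"
  shows "\<exists>M. compose_noise N M = (\<lambda>i j. if i = j then 1 else 0)"
proof -
  define A :: "real^'a^'a" where "A = (\<chi> i k. N i k)"
  have "x = 0" if "A *v x = 0" for x
  proof -
    have "mat_vec N (vec_nth x) = (\<lambda>_. 0)"
      using that by (simp add: A_def mat_vec_def matrix_vector_mult_def vec_eq_iff fun_eq_iff)
    then show "x = 0" using ker by (simp add: vec_eq_iff fun_eq_iff)
  qed
  then obtain B where "B ** A = mat 1"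
    using matrix_left_invertible_ker by blast
  then have "A ** B = mat 1"
    by (simp add: matrix_left_right_inverse)
  then have "compose_noise N (\<lambda>k j. B $ k $ j) = (\<lambda>i j. if i = j then 1 else 0)"
    by (simp add: A_def compose_noise_def matrix_matrix_mult_def mat_def vec_eq_iff fun_eq_iff)
  then show ?thesis by blast
qed

lemma right_inverse_row_sum:
  fixes N :: "'a::finite \<Rightarrow> 'a \<Rightarrow> real"
  assumes ker: "\<And>y. mat_vec N y = (\<lambda>_. 0) \<Longrightarrow> y = (\<lambda>_. 0)"
    and row: "\<And>i. (\<Sum>k\<in>UNIV. N i k) = 1"
    and inv: "compose_noise N M = (\<lambda>i j. if i = j then 1 else 0)"
  shows "(\<Sum>j\<in>UNIV. M i j) = 1"
proof -
  have ker_eq: "mat_vec N (\<lambda>k. (\<Sum>j\<in>UNIV. M k j) - 1) i = 0" for i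
  proof -
    have "mat_vec N (\<lambda>k. (\<Sum>j\<in>UNIV. M k j) - 1) i
        = (\<Sum>k\<in>UNIV. (\<Sum>j\<in>UNIV. N i k * M k j) - N i k)"
      unfolding mat_vec_def by (intro sum.cong refl) (simp add: right_diff_distrib sum_distrib_left)
    also have "\<dots> = (\<Sum>k\<in>UNIV. \<Sum>j\<in>UNIV. N i k * M k j) - (\<Sum>k\<in>UNIV. N i k)"
      by (rule sum_subtractf)
    also have "\<dots> = (\<Sum>j\<in>UNIV. compose_noise N M i j) - 1"
      unfolding compose_noise_def row by (rule arg_cong[where f = "\<lambda>t. t - 1"], rule sum.swap)
    also have "\<dots> = 0"
      unfolding inv by simp
    finally show ?thesis .
  qed
  have "(\<lambda>k. (\<Sum>j\<in>UNIV. M k j) - 1) = (\<lambda>_. 0)"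
    by (rule ker) (use ker_eq in auto)
  then show ?thesis by (simp add: fun_eq_iff)
qed

lemma upper_bounded_right_inverse_lower_bound:
  fixes N :: "'a::finite \<Rightarrow> 'a \<Rightarrow> real"
  defines "d \<equiv> real CARD('a)"
  assumes N: "upper_bounded \<delta> N" and "0 \<le> \<delta>" and small: "d * \<delta> < 1"
    and inv: "compose_noise N M = (\<lambda>i j. if i = j then 1 else 0)"
  shows "- d * \<delta> \<le> (1 - d * \<delta>) * M i j"
proof -
  have row: "\<And>i. (\<Sum>k\<in>UNIV. N i k) = 1" and off_diag: "\<And>i k. k \<noteq> i \<Longrightarrow> N i k \<le> \<delta>"
    using N unfolding upper_bounded_def stochastic_def by auto
  define y where "y = (\<lambda>k. M k j)"
  define s where "s = (\<Sum>k\<in>UNIV. y k)"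
  have Ny: "mat_vec N y = (\<lambda>i. if i = j then 1 else 0)"
    using inv by (simp add: y_def mat_vec_def compose_noise_def fun_eq_iff)
  obtain lo where lo: "\<And>k. y lo \<le> y k" using finite_ex_argmin by blast
  obtain hi where hi: "\<And>k. y k \<le> y hi" using finite_ex_argmin[of "\<lambda>k. - y k"] by auto
  have "0 \<le> mat_vec N y lo" and "mat_vec N y hi \<le> 1"
    by (simp_all add: Ny)
  then have at_lo: "0 \<le> (1 - d * \<delta>) * y lo + \<delta> * s"
    and at_hi: "(1 - d * \<delta>) * y hi + \<delta> * s \<le> 1"
    using mat_vec_le_at_argmin[of N lo \<delta> y, OF row off_diag lo]
      mat_vec_ge_at_argmax[of N hi \<delta> y, OF row off_diag hi]
    unfolding d_def s_def by linarith+
  have "s \<le> d * y hi"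
    using sum_mono[of UNIV y "\<lambda>_. y hi"] hi by (simp add: s_def d_def)
  then have "(1 - d * \<delta>) * s \<le> (1 - d * \<delta>) * (d * y hi)"
    using small by (intro mult_left_mono) auto
  also have "\<dots> = d * ((1 - d * \<delta>) * y hi)"
    by (simp add: algebra_simps)
  also have "\<dots> \<le> d * (1 - \<delta> * s)"
    using at_hi by (intro mult_left_mono) (auto simp: d_def)
  finally have "s - d * \<delta> * s \<le> d - d * \<delta> * s"
    by (simp add: algebra_simps)
  then have "\<delta> * s \<le> \<delta> * d"
    using \<open>0 \<le> \<delta>\<close> by (intro mult_left_mono) auto
  then have "- d * \<delta> \<le> (1 - d * \<delta>) * y lo"
    using at_lo by (simp add: mult.commute)
  also have "\<dots> \<le> (1 - d * \<delta>) * y i"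
    using lo small by simp
  finally show ?thesis by (simp add: y_def)
qed

lemma f_noise_affine:
  fixes d :: nat
  assumes "d \<noteq> 1" and "0 \<le> \<delta>" and "real d * \<delta> < 1"
  shows "(1 - real d * f_noise d \<delta>) * x + f_noise d \<delta>
       = ((1 - real d * \<delta>) * x + 2 * (real d - 1)^2 * \<delta>)
         / (2 * (real d - 1)^2 * real d * \<delta> + 1 - real d * \<delta>)"
proof -
  define c where "c = 2 * (real d - 1)^2"
  define den where "den = c * real d * \<delta> + 1 - real d * \<delta>"
  have "c > 0" using assms(1) by (simp add: c_def)
  have "den > 0"
  proof -
    have "0 \<le> c * real d * \<delta>" using \<open>c > 0\<close> assms(2) by simp
    then show ?thesis using assms(3) by (simp add: den_def)
  qed
  have f: "f_noise d \<delta> = c * \<delta> / den"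
  proof (cases "\<delta> = 0")
    case False
    then show ?thesis
      using \<open>c > 0\<close> \<open>den > 0\<close> by (simp add: f_noise_def c_def den_def field_simps)
  qed (simp add: f_noise_def)
  have "1 - real d * (c * \<delta> / den) = (1 - real d * \<delta>) / den"
    using \<open>den > 0\<close> by (simp add: den_def field_simps)
  then show ?thesis
    unfolding f c_def[symmetric] den_def[symmetric]
    using \<open>den > 0\<close> by (simp add: add_divide_distrib)
qed

lemma f_noise_affine_nonneg:
  fixes d :: nat
  assumes "2 \<le> d" and "0 \<le> \<delta>" and "real d * \<delta> < 1"
    and x: "- real d * \<delta> \<le> (1 - real d * \<delta>) * x"
  shows "0 \<le> (1 - real d * f_noise d \<delta>) * x + f_noise d \<delta>"
proof -
  have "0 \<le> 2 * (real d - 1)^2 * real d * \<delta>"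
    using \<open>0 \<le> \<delta>\<close> by simp
  then have den: "0 \<le> 2 * (real d - 1)^2 * real d * \<delta> + 1 - real d * \<delta>"
    using assms(3) by linarith
  have "real d \<le> 2 * (real d - 1)^2"
  proof -
    have "0 \<le> (2 * real d - 1) * (real d - 2)" using assms(1) by simp
    then show ?thesis by (simp add: power2_eq_square algebra_simps)
  qed
  then have "real d * \<delta> \<le> 2 * (real d - 1)^2 * \<delta>"
    using \<open>0 \<le> \<delta>\<close> by (rule mult_right_mono)
  then have num: "0 \<le> (1 - real d * \<delta>) * x + 2 * (real d - 1)^2 * \<delta>"
    using x by linarith
  show ?thesis
    using assms num den by (simp add: f_noise_affine divide_nonneg_nonneg)
qed

lemma compose_noise_affine_right_inverse:
  fixes N :: "'a::finite \<Rightarrow> 'a \<Rightarrow> real"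
  assumes row: "\<And>i. (\<Sum>k\<in>UNIV. N i k) = 1"
    and inv: "compose_noise N M = (\<lambda>i j. if i = j then 1 else 0)"
  shows "compose_noise N (\<lambda>i j. a * M i j + b) = (\<lambda>i j. if i = j then a + b else b)"
proof (intro ext)
  fix i j
  have "compose_noise N (\<lambda>i j. a * M i j + b) i j = a * compose_noise N M i j + b * (\<Sum>k\<in>UNIV. N i k)"
    by (simp add: compose_noise_def algebra_simps sum.distrib sum_distrib_left)
  then show "compose_noise N (\<lambda>i j. a * M i j + b) i j = (if i = j then a + b else b)"
    using row inv by simp
qed

theorem theorem8:
  fixes N :: "'a::finite \<Rightarrow> 'a \<Rightarrow> real" and \<delta> :: real
  assumes "card (UNIV :: 'a set) \<ge> 2"
    and "0 \<le> \<delta>" and "\<delta> < 1 / real (card (UNIV :: 'a set))"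
    and "upper_bounded \<delta> N"
  shows "\<exists>P. stochastic P \<and>
           compose_noise N P = uniform_noise (f_noise (card (UNIV :: 'a set)) \<delta>)"
proof -
  define e where "e = f_noise CARD('a) \<delta>"
  have small: "real CARD('a) * \<delta> < 1"
    using assms(1,3) by (simp add: field_simps)
  have row: "\<And>i. (\<Sum>k\<in>UNIV. N i k) = 1"
    using assms(4) by (simp add: upper_bounded_def stochastic_def)
  note ker = upper_bounded_mat_vec_eq_0[OF assms(4) small]
  obtain M where inv: "compose_noise N M = (\<lambda>i j. if i = j then 1 else 0)"
    using mat_vec_injective_imp_right_inverse[OF ker] by blast
  define P where "P = (\<lambda>i j. (1 - real CARD('a) * e) * M i j + e)"
  have "stochastic P"
    unfolding stochastic_def
  proof (intro conjI allI)
    show "0 \<le> P i j" for i j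
      unfolding P_def e_def
      using f_noise_affine_nonneg assms(1,2) small
        upper_bounded_right_inverse_lower_bound[OF assms(4,2) small inv] by blast
    show "(\<Sum>j\<in>UNIV. P i j) = 1" for i
      using right_inverse_row_sum[OF ker row inv]
      by (simp add: P_def sum.distrib sum_distrib_left[symmetric])
  qed
  moreover have "compose_noise N P = uniform_noise e"
    unfolding P_def compose_noise_affine_right_inverse[OF row inv]
    by (simp add: uniform_noise_def fun_eq_iff algebra_simps)
  ultimately show ?thesis
    unfolding e_def by blast
qed

end
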